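(* Let $n$ be a positive integer such that $\gcd(n,7)=1$. Then: (i) if $\gcd(n,2)=1$, the families of $2$-constacyclic and $3$-constacyclic codes of length $n$ over $\mathbb{F}_7$ are monomially equivalent; (ii) if $\gcd(n,3)=1$, the families of $3$-constacyclic and $6$-constacyclic codes of length $n$ over $\mathbb{F}_7$ are monomially equivalent.
   Context: For $c\in\mathbb{F}_q^*$, a linear code $C\subseteq\mathbb{F}_q^n$ is called $c$-constacyclic if for every codeword $(c_0,c_1,\ldots,c_{n-1})\in C$ we also have $(c\, c_{n-1},c_0,\ldots,c_{n-2})\in C$. An isometry of linear codes is an $\mathbb{F}_q$-linear isomorphism preserving Hamming distance (equivalently, a map given by a monomial matrix). For $a,b\in\mathbb{F}_q^*$, the families of $a$-constacyclic and $b$-constacyclic codes of length $n$ over $\mathbb{F}_q$ are called monomially equivalent if there is a one-to-one correspondence between the set of $a$-constacyclic codes and the set of $b$-constacyclic codes of length $n$ given by an isometry of linear codes. *)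

theory Defs
  imports Main "HOL-Library.Numeral_Type"
begin

type_synonym F7 = 7

definition vecs :: "nat \<Rightarrow> F7 list set" where
  "vecs n = {xs. length xs = n}"

definition vadd :: "F7 list \<Rightarrow> F7 list \<Rightarrow> F7 list" where
  "vadd xs ys = map2 (+) xs ys"

definition vscale :: "F7 \<Rightarrow> F7 list \<Rightarrow> F7 list" where
  "vscale a xs = map ((*) a) xs"

definition linear_code :: "nat \<Rightarrow> F7 list set \<Rightarrow> bool" where
  "linear_code n C \<longleftrightarrow> C \<subseteq> vecs n \<and> replicate n 0 \<in> C \<and>
     (\<forall>x\<in>C. \<forall>y\<in>C. vadd x y \<in> C) \<and> (\<forall>a. \<forall>x\<in>C. vscale a x \<in> C)"

definition constashift :: "F7 \<Rightarrow> F7 list \<Rightarrow> F7 list" where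
  "constashift c xs = (if xs = [] then [] else (c * last xs) # butlast xs)"

definition constacyclic :: "nat \<Rightarrow> F7 \<Rightarrow> F7 list set \<Rightarrow> bool" where
  "constacyclic n c C \<longleftrightarrow> linear_code n C \<and> (\<forall>x\<in>C. constashift c x \<in> C)"

definition hamming_dist :: "F7 list \<Rightarrow> F7 list \<Rightarrow> nat" where
  "hamming_dist xs ys = card {i. i < length xs \<and> xs ! i \<noteq> ys ! i}"

definition isometry :: "nat \<Rightarrow> (F7 list \<Rightarrow> F7 list) \<Rightarrow> bool" where
  "isometry n f \<longleftrightarrow> bij_betw f (vecs n) (vecs n) \<and>
     (\<forall>x\<in>vecs n. \<forall>y\<in>vecs n. f (vadd x y) = vadd (f x) (f y)) \<and>
     (\<forall>a. \<forall>x\<in>vecs n. f (vscale a x) = vscale a (f x)) \<and>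
     (\<forall>x\<in>vecs n. \<forall>y\<in>vecs n. hamming_dist (f x) (f y) = hamming_dist x y)"

definition monomially_equivalent :: "nat \<Rightarrow> F7 \<Rightarrow> F7 \<Rightarrow> bool" where
  "monomially_equivalent n a b \<longleftrightarrow>
     (\<exists>f. isometry n f \<and>
        bij_betw (\<lambda>C. f ` C) {C. constacyclic n a C} {C. constacyclic n b C})"

end

theory Submission
  imports Defs
begin

text \<open>Two kinds of monomial maps suffice. Scaling coordinate i by \<open>l\<^sup>i\<close> turns the
  \<open>b l\<^sup>n\<close>-constacyclic shift into \<open>l\<close> times the \<open>b\<close>-constacyclic shift, so \<open>a\<close> and \<open>b\<close>
  are equivalent whenever \<open>a / b\<close> is an n-th power of a unit. Reversing the coordinates turns
  the \<open>a\<close>-shift into the inverse of the \<open>a\<^sup>-\<^sup>1\<close>-shift, and a code is closed under that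
  inverse because it is finite. For odd n, \<open>2\<^sup>-\<^sup>1 = 4 = 3 \<cdot> 6\<^sup>n\<close>; for \<open>3 \<nmid> n\<close>, \<open>3 / 6 = 4\<close>
  has order 3 and hence is an n-th power.\<close>

lemma length_vscale [simp]: "length (vscale a x) = length x"
  by (simp add: vscale_def)

lemma finite_vecs: "finite (vecs n)"
  using finite_lists_length_eq[of "UNIV :: F7 set" n] by (simp add: vecs_def)

lemma isometry_vecs: "isometry n f \<Longrightarrow> x \<in> vecs n \<Longrightarrow> f x \<in> vecs n"
  unfolding isometry_def by (meson bij_betwE)

lemma linear_code_image:
  assumes f: "isometry n f" and C: "linear_code n C"
  shows "linear_code n (f ` C)"
proof -
  have zero: "replicate n 0 \<in> vecs n" by (simp add: vecs_def)
  have "vscale 0 x = replicate n 0" if "x \<in> vecs n" for x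
    using that by (induction x arbitrary: n) (auto simp: vscale_def vecs_def)
  then have "f (replicate n 0) = replicate n 0"
    using f zero isometry_vecs[OF f zero] unfolding isometry_def by metis
  moreover have "C \<subseteq> vecs n" "replicate n 0 \<in> C"
    using C by (auto simp: linear_code_def)
  ultimately show ?thesis
    unfolding linear_code_def
  proof (intro conjI ballI allI)
    show "f ` C \<subseteq> vecs n" using \<open>C \<subseteq> vecs n\<close> isometry_vecs[OF f] by blast
    show "replicate n 0 \<in> f ` C"
      using \<open>f (replicate n 0) = replicate n 0\<close> \<open>replicate n 0 \<in> C\<close> by (metis image_eqI)
  next
    fix x y assume "x \<in> f ` C" "y \<in> f ` C"
    then obtain u v where "u \<in> C" "v \<in> C" "x = f u" "y = f v" by blast
    moreover have "vadd u v \<in> C" "f (vadd u v) = vadd (f u) (f v)"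
      using C f \<open>C \<subseteq> vecs n\<close> \<open>u \<in> C\<close> \<open>v \<in> C\<close>
      unfolding linear_code_def isometry_def by blast+
    ultimately show "vadd x y \<in> f ` C" by (metis image_eqI)
  next
    fix a x assume "x \<in> f ` C"
    then obtain u where "u \<in> C" "x = f u" by blast
    moreover have "vscale a u \<in> C" "f (vscale a u) = vscale a (f u)"
      using C f \<open>C \<subseteq> vecs n\<close> \<open>u \<in> C\<close>
      unfolding linear_code_def isometry_def by blast+
    ultimately show "vscale a x \<in> f ` C" by (metis image_eqI)
  qed
qed

lemma monomially_equivalentI:
  assumes f: "isometry n f" and g: "isometry n g"
    and inverse: "\<And>x. x \<in> vecs n \<Longrightarrow> g (f x) = x \<and> f (g x) = x"
    and forward: "\<And>C. constacyclic n a C \<Longrightarrow> constacyclic n b (f ` C)"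
    and backward: "\<And>D. constacyclic n b D \<Longrightarrow> constacyclic n a (g ` D)"
  shows "monomially_equivalent n a b"
proof -
  have "(g \<circ> f) ` C = C" "(f \<circ> g) ` C = C" if "constacyclic n a C \<or> constacyclic n b C" for C
  proof -
    have "C \<subseteq> vecs n" using that by (auto simp: constacyclic_def linear_code_def)
    then show "(g \<circ> f) ` C = C" "(f \<circ> g) ` C = C"
      using inverse by (force simp: image_iff)+
  qed
  then have "bij_betw (\<lambda>C. f ` C) {C. constacyclic n a C} {C. constacyclic n b C}"
    using forward backward
    by (intro bij_betw_byWitness[where f' = "\<lambda>D. g ` D"]) (auto simp: image_comp)
  then show ?thesis using f unfolding monomially_equivalent_def by blast
qed

lemma isometry_comp:
  assumes f: "isometry n f" and g: "isometry n g"
  shows "isometry n (g \<circ> f)"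
  using assms isometry_vecs[OF f] bij_betw_trans[of f "vecs n" "vecs n" g "vecs n"]
  unfolding isometry_def by simp

lemma monomially_equivalent_trans:
  assumes "monomially_equivalent n a b" "monomially_equivalent n b c"
  shows "monomially_equivalent n a c"
proof -
  obtain f g where "isometry n f" "isometry n g"
    and "bij_betw (\<lambda>C. f ` C) {C. constacyclic n a C} {C. constacyclic n b C}"
    and "bij_betw (\<lambda>C. g ` C) {C. constacyclic n b C} {C. constacyclic n c C}"
    using assms unfolding monomially_equivalent_def by blast
  then have "isometry n (g \<circ> f)"
    and "bij_betw ((\<lambda>C. g ` C) \<circ> (\<lambda>C. f ` C)) {C. constacyclic n a C} {C. constacyclic n c C}"
    by (auto intro: isometry_comp bij_betw_trans)
  moreover have "(\<lambda>C. g ` C) \<circ> (\<lambda>C. f ` C) = (\<lambda>C. (g \<circ> f) ` C)"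
    by (simp add: fun_eq_iff image_comp)
  ultimately show ?thesis
    unfolding monomially_equivalent_def by (intro exI[of _ "g \<circ> f"]) (simp add: comp_def)
qed

lemma hamming_dist_rev:
  assumes "length y = length x"
  shows "hamming_dist (rev x) (rev y) = hamming_dist x y"
proof -
  let ?D = "{i. i < length x \<and> x ! i \<noteq> y ! i}"
  have "{i. i < length (rev x) \<and> rev x ! i \<noteq> rev y ! i} = (\<lambda>i. length x - Suc i) ` ?D"
  proof (intro set_eqI iffI)
    fix i assume "i \<in> {i. i < length (rev x) \<and> rev x ! i \<noteq> rev y ! i}"
    then show "i \<in> (\<lambda>i. length x - Suc i) ` ?D"
      using assms by (intro image_eqI[where x = "length x - Suc i"]) (auto simp: rev_nth)
  qed (use assms in \<open>auto simp: rev_nth Suc_diff_Suc\<close>)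
  moreover have "inj_on (\<lambda>i. length x - Suc i) ?D"
    by (auto simp: inj_on_def)
  ultimately show ?thesis
    unfolding hamming_dist_def by (simp add: card_image)
qed

lemma isometry_rev: "isometry n rev"
  unfolding isometry_def
proof (intro conjI ballI allI)
  show "bij_betw rev (vecs n) (vecs n)"
    by (rule bij_betw_byWitness[where f' = rev]) (auto simp: vecs_def)
  fix x y assume "x \<in> vecs n" "y \<in> vecs n"
  then have "length y = length x" by (simp add: vecs_def)
  then show "rev (vadd x y) = vadd (rev x) (rev y)"
    and "hamming_dist (rev x) (rev y) = hamming_dist x y"
    by (simp_all add: vadd_def rev_map zip_rev hamming_dist_rev)
qed (simp add: vscale_def rev_map)

lemma constashift_rev_constashift:
  assumes "c * a = 1"
  shows "constashift c (rev (constashift a y)) = rev y"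
proof (cases y rule: rev_cases)
  case (snoc ys z)
  have "c * (a * z) = z" using assms by (simp flip: mult.assoc)
  then show ?thesis using snoc by (simp add: constashift_def)
qed (simp add: constashift_def)

lemma inj_constashift: "c * a = 1 \<Longrightarrow> inj (constashift a)"
  by (rule injI) (metis constashift_rev_constashift rev_rev_ident)

lemma constashift_image_eq:
  assumes "constacyclic n a C" and "inj (constashift a)"
  shows "constashift a ` C = C"
proof (rule endo_inj_surj)
  show "finite C"
    using assms(1) finite_vecs by (auto simp: constacyclic_def linear_code_def intro: finite_subset)
qed (use assms in \<open>auto simp: constacyclic_def intro: inj_on_subset\<close>)

lemma constacyclic_rev_image:
  assumes ca: "c * a = 1" and C: "constacyclic n a C"
  shows "constacyclic n c (rev ` C)"
proof -
  have "constashift c (rev x) \<in> rev ` C" if "x \<in> C" for x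
  proof -
    obtain y where "y \<in> C" "x = constashift a y"
      using constashift_image_eq[OF C inj_constashift[OF ca]] \<open>x \<in> C\<close> by blast
    then show ?thesis using constashift_rev_constashift[OF ca] by auto
  qed
  then show ?thesis
    using C linear_code_image[OF isometry_rev] by (auto simp: constacyclic_def)
qed

lemma monomially_equivalent_inverse:
  assumes "c * a = 1"
  shows "monomially_equivalent n a c"
proof (rule monomially_equivalentI[OF isometry_rev isometry_rev])
  have "a * c = 1" using assms by (simp add: mult.commute)
  then show "constacyclic n a (rev ` D)" if "constacyclic n c D" for D
    using constacyclic_rev_image that by blast
qed (use assms constacyclic_rev_image in auto)

definition scale_powers :: "F7 \<Rightarrow> F7 list \<Rightarrow> F7 list" where
  "scale_powers l x = map (\<lambda>i. l ^ i * x ! i) [0..<length x]"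

lemma length_scale_powers [simp]: "length (scale_powers l x) = length x"
  by (simp add: scale_powers_def)

lemma nth_scale_powers [simp]: "i < length x \<Longrightarrow> scale_powers l x ! i = l ^ i * x ! i"
  by (simp add: scale_powers_def)

lemma power_cancel_unit:
  assumes "l * m = (1 :: F7)"
  shows "m ^ i * (l ^ i * u) = u"
proof -
  have "m ^ i * (l ^ i * u) = (l * m) ^ i * u" by (simp add: power_mult_distrib ac_simps)
  then show ?thesis using assms by simp
qed

lemma scale_powers_inverse: "l * m = 1 \<Longrightarrow> scale_powers m (scale_powers l x) = x"
  by (intro nth_equalityI) (simp_all add: power_cancel_unit)

lemma hamming_dist_scale_powers:
  assumes lm: "l * m = 1" and "length y = length x"
  shows "hamming_dist (scale_powers l x) (scale_powers l y) = hamming_dist x y"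
proof -
  have "l ^ i * x ! i = l ^ i * y ! i \<longleftrightarrow> x ! i = y ! i" for i
    by (metis power_cancel_unit[OF lm])
  then show ?thesis
    using assms(2) unfolding hamming_dist_def by (metis length_scale_powers nth_scale_powers)
qed

lemma isometry_scale_powers:
  assumes lm: "l * m = 1"
  shows "isometry n (scale_powers l)"
  unfolding isometry_def
proof (intro conjI ballI allI)
  have "m * l = 1" using lm by (simp add: mult.commute)
  then show "bij_betw (scale_powers l) (vecs n) (vecs n)"
    using lm by (intro bij_betw_byWitness[where f' = "scale_powers m"])
      (auto simp: vecs_def scale_powers_inverse)
  fix x y assume "x \<in> vecs n" "y \<in> vecs n"
  then have "length y = length x" by (simp add: vecs_def)
  then show "scale_powers l (vadd x y) = vadd (scale_powers l x) (scale_powers l y)"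
    by (intro nth_equalityI) (simp_all add: vadd_def distrib_left)
  show "hamming_dist (scale_powers l x) (scale_powers l y) = hamming_dist x y"
    using \<open>length y = length x\<close> by (rule hamming_dist_scale_powers[OF lm])
next
  show "scale_powers l (vscale a x) = vscale a (scale_powers l x)" for a x
    by (intro nth_equalityI) (simp_all add: vscale_def mult.left_commute)
qed

lemma constashift_scale_powers:
  assumes lm: "l * m = 1"
  shows "constashift b (scale_powers l x)
           = scale_powers l (vscale m (constashift (b * l ^ length x) x))"
proof (cases x rule: rev_cases)
  case (snoc ys z)
  have head: "b * (l ^ length ys * z) = m * (b * (l * l ^ length ys) * z)"
    using power_cancel_unit[OF lm, of 1 "b * l ^ length ys * z"] by (simp add: ac_simps)
  have tail: "l ^ i * ys ! i = l * l ^ i * (m * ys ! i)" for i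
    using power_cancel_unit[OF lm, of 1 "l ^ i * ys ! i"] by (simp add: ac_simps)
  have "scale_powers l (ys @ [z]) = scale_powers l ys @ [l ^ length ys * z]"
    by (intro nth_equalityI) (auto simp: nth_append less_Suc_eq)
  then show ?thesis
    using snoc head tail
    by (simp add: constashift_def vscale_def, intro nth_equalityI)
      (auto simp: nth_Cons split: nat.split)
qed (simp add: constashift_def scale_powers_def)

lemma constacyclic_scale_powers_image:
  assumes lm: "l * m = 1" and C: "constacyclic n (b * l ^ n) C"
  shows "constacyclic n b (scale_powers l ` C)"
proof -
  have "constashift b (scale_powers l x) \<in> scale_powers l ` C" if "x \<in> C" for x
  proof -
    have "length x = n" using C that by (auto simp: constacyclic_def linear_code_def vecs_def)
    then have "constashift b (scale_powers l x)
                 = scale_powers l (vscale m (constashift (b * l ^ n) x))"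
      by (simp add: constashift_scale_powers[OF lm])
    moreover have "vscale m (constashift (b * l ^ n) x) \<in> C"
      using C that by (simp add: constacyclic_def linear_code_def)
    ultimately show ?thesis by blast
  qed
  then show ?thesis
    using C linear_code_image[OF isometry_scale_powers[OF lm]] by (auto simp: constacyclic_def)
qed

lemma monomially_equivalent_scale:
  fixes l m a b :: F7
  assumes lm: "l * m = 1" and ab: "a = b * l ^ n"
  shows "monomially_equivalent n a b"
proof -
  have ml: "m * l = 1" using lm by (simp add: mult.commute)
  have ba: "b = a * m ^ n" using ab power_cancel_unit[OF lm] by (simp add: ac_simps)
  show ?thesis
  proof (rule monomially_equivalentI[OF isometry_scale_powers[OF lm] isometry_scale_powers[OF ml]])
    show "scale_powers m (scale_powers l x) = x \<and> scale_powers l (scale_powers m x) = x" for x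
      using lm ml by (simp add: scale_powers_inverse)
    show "constacyclic n b (scale_powers l ` C)" if "constacyclic n a C" for C
      using constacyclic_scale_powers_image[OF lm] that unfolding ab .
    show "constacyclic n a (scale_powers m ` D)" if "constacyclic n b D" for D
      using constacyclic_scale_powers_image[OF ml] that unfolding ba .
  qed
qed

lemma power_mod_period:
  fixes x :: "'a :: monoid_mult"
  assumes "x ^ k = 1"
  shows "x ^ n = x ^ (n mod k)"
proof -
  have "x ^ n = x ^ (k * (n div k) + n mod k)" by simp
  also have "\<dots> = (x ^ k) ^ (n div k) * x ^ (n mod k)" by (simp only: power_add power_mult)
  finally show ?thesis using assms by simp
qed

theorem proposition4p4:
  fixes n :: nat
  assumes "n > 0" and "coprime n 7"
  shows "(coprime n 2 \<longrightarrow> monomially_equivalent n 2 3) \<and>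
         (coprime n 3 \<longrightarrow> monomially_equivalent n 3 6)"
proof (intro conjI impI)
  assume "coprime n 2"
  then have "n mod 2 = 1" by (simp add: odd_iff_mod_2_eq_one)
  then have "(6 :: F7) ^ n = 6" using power_mod_period[of "6 :: F7" 2 n] by simp
  then have "monomially_equivalent n 4 3"
    by (intro monomially_equivalent_scale[of 6 6]) simp_all
  moreover have "monomially_equivalent n 2 4" by (rule monomially_equivalent_inverse) simp
  ultimately show "monomially_equivalent n 2 3" by (rule monomially_equivalent_trans[rotated])
next
  assume "coprime n 3"
  then have "\<not> 3 dvd n" by (auto dest: coprime_common_divisor[of n 3 3])
  then have "n mod 3 = 1 \<or> n mod 3 = 2" by arith
  then obtain l m :: F7 where "l * m = 1" and "3 = 6 * l ^ n"
  proof (elim disjE)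
    assume "n mod 3 = 1"
    then have "(4 :: F7) ^ n = 4" using power_mod_period[of "4 :: F7" 3 n] by simp
    then show ?thesis using that[of 4 2] by simp
  next
    assume "n mod 3 = 2"
    then have "(2 :: F7) ^ n = 4" using power_mod_period[of "2 :: F7" 3 n] by simp
    then show ?thesis using that[of 2 4] by simp
  qed
  then show "monomially_equivalent n 3 6"
    by (rule monomially_equivalent_scale)
qed

end
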